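(* Let $\nu\in\mathcal M^+_1(\mathbb R)$. Then there exists $\mu\in\mathcal M^+_2(\mathbb R)$ such that $$C_1[\nu](z)=C_2[\mu](z),\qquad z\in\mathbb C^+,$$ if and only if $\nu((-\infty,0])<\infty$.
   Context: $\mathbb C^+=\{z:\operatorname{Im}z>0\}$. For $\alpha\ge0$, $\mathcal M^+_\alpha(\mathbb R)$ is the set of positive Borel (Radon) measures $\mu$ on $\mathbb R$ with $\int_{\mathbb R}(1+|t|)^{-\alpha}\mu(dt)<\infty$. For $\alpha>0$, $C_\alpha[\mu](z)=\int_{\mathbb R}\frac{\mu(dt)}{(z+t)^\alpha}$, $z\in\mathbb C^+$. *)

theory Defs
  imports "HOL-Analysis.Analysis"
begin

text \<open>M^+_alpha(R): positive Borel measures on R with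
  \<integral> (1+|t|)^(-alpha) d mu < \<infinity>  (local finiteness follows for alpha \<ge> 0).\<close>
definition M_plus :: "real \<Rightarrow> real measure set" where
  "M_plus \<alpha> = {\<mu>. sets \<mu> = sets borel \<and>
      (\<integral>\<^sup>+ t. ennreal ((1 + \<bar>t\<bar>) powr (- \<alpha>)) \<partial>\<mu>) < \<infinity>}"

definition C_transform :: "nat \<Rightarrow> real measure \<Rightarrow> complex \<Rightarrow> complex" where
  "C_transform \<alpha> \<mu> z = (\<integral> t. 1 / (z + complex_of_real t) ^ \<alpha> \<partial>\<mu>)"

end

theory Submission
  imports Defs "HOL-Real_Asymp.Real_Asymp"
begin

(* Only if: put z = x + i. Taking imaginary parts, C_1[nu] = C_2[mu] says that
   int ((x+t)^2+1)^-1 dnu(t) = int 2(x+t) ((x+t)^2+1)^-2 dmu(t) for every real x.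
   Integrating over x in [0,b] and using Fubini turns this into
   int (arctan (b+t) - arctan t) dnu(t) = int ((t^2+1)^-1 - ((b+t)^2+1)^-1) dmu(t),
   which is at most int (t^2+1)^-1 dmu.  For b = r + 1 the integrand on the left is at
   least pi/4 on [-r,0], so nu([-r,0]) is bounded uniformly in r.

   If: F(s) = nu((-inf,s)) is finite, and mu(ds) = F(s) ds works.  Indeed
   1/(z+t) = int_t^inf (z+s)^-2 ds, so Fubini gives C_1[nu](z) = int F(s) (z+s)^-2 ds;
   and mu is in M_2^+ because int_t^inf (1+|s|)^-2 ds <= pi [t <= 0] + (1+|t|)^-1,
   which is nu-integrable exactly when nu((-inf,0]) is finite. *)

lemma M_plus_sets: "\<mu> \<in> M_plus a \<Longrightarrow> sets \<mu> = sets borel"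
  by (simp add: M_plus_def)

lemma M_plus_space: "\<mu> \<in> M_plus a \<Longrightarrow> space \<mu> = UNIV"
  using sets_eq_imp_space_eq[OF M_plus_sets] by simp

lemma M_plus_mono:
  assumes "a \<le> b"
  shows "M_plus a \<subseteq> M_plus b"
proof
  fix \<mu> assume \<mu>: "\<mu> \<in> M_plus a"
  have "ennreal ((1 + \<bar>t\<bar>) powr (- b)) \<le> ennreal ((1 + \<bar>t\<bar>) powr (- a))" for t :: real
    using assms by (intro ennreal_leI powr_mono) auto
  then have "(\<integral>\<^sup>+ t. ennreal ((1 + \<bar>t\<bar>) powr (- b)) \<partial>\<mu>) \<le> (\<integral>\<^sup>+ t. ennreal ((1 + \<bar>t\<bar>) powr (- a)) \<partial>\<mu>)"
    by (intro nn_integral_mono)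
  then show "\<mu> \<in> M_plus b"
    using \<mu> by (auto simp: M_plus_def)
qed

lemma M_plus_weight_integrable:
  assumes "\<mu> \<in> M_plus a"
  shows "integrable \<mu> (\<lambda>t. (1 + \<bar>t\<bar>) powr (- a))"
proof (rule integrableI_bounded)
  show "(\<lambda>t. (1 + \<bar>t\<bar>) powr (- a)) \<in> borel_measurable \<mu>"
    using M_plus_sets[OF assms] by measurable
  show "(\<integral>\<^sup>+ t. ennreal (norm ((1 + \<bar>t\<bar>) powr (- a))) \<partial>\<mu>) < \<infinity>"
    using assms by (simp add: M_plus_def)
qed

lemma M_plus_emeasure_Icc_finite:
  assumes \<mu>: "\<mu> \<in> M_plus a" and a: "0 \<le> a"
  shows "emeasure \<mu> {-r..r} < \<infinity>"
proof (cases "0 \<le> r")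
  case True
  have "ennreal ((1 + r) powr (- a)) * indicator {-r..r} t \<le> ennreal ((1 + \<bar>t\<bar>) powr (- a))" for t
    using a by (auto intro!: ennreal_leI powr_mono2' split: split_indicator)
  then have "(\<integral>\<^sup>+ t. ennreal ((1 + r) powr (- a)) * indicator {-r..r} t \<partial>\<mu>)
      \<le> (\<integral>\<^sup>+ t. ennreal ((1 + \<bar>t\<bar>) powr (- a)) \<partial>\<mu>)"
    by (intro nn_integral_mono)
  also have "\<dots> < \<infinity>"
    using \<mu> by (simp add: M_plus_def)
  finally show ?thesis
    using True M_plus_sets[OF \<mu>] by (auto simp: nn_integral_cmult_indicator ennreal_mult_less_top)
qed simp

lemma M_plus_emeasure_bounded_finite:
  assumes \<mu>: "\<mu> \<in> M_plus a" and a: "0 \<le> a" and A: "A \<in> sets borel" "bounded A"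
  shows "emeasure \<mu> A < \<infinity>"
proof -
  obtain r where "\<forall>x\<in>A. \<bar>x\<bar> \<le> r"
    using A(2) by (auto simp: bounded_iff)
  then have "emeasure \<mu> A \<le> emeasure \<mu> {-r..r}"
    using A(1) M_plus_sets[OF \<mu>] by (intro emeasure_mono) (auto simp: abs_le_iff)
  then show ?thesis
    using M_plus_emeasure_Icc_finite[OF \<mu> a] by (simp add: le_less_trans)
qed

lemma M_plus_sigma_finite:
  assumes \<mu>: "\<mu> \<in> M_plus a" and a: "0 \<le> a"
  shows "sigma_finite_measure \<mu>"
proof
  let ?A = "range (\<lambda>n::nat. {- real n .. real n})"
  have "\<Union> ?A = UNIV"
  proof (intro set_eqI iffI UNIV_I)
    fix x :: real
    obtain n :: nat where "\<bar>x\<bar> \<le> real n"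
      using real_arch_simple by blast
    then have "x \<in> {- real n .. real n}"
      by (simp add: abs_le_iff)
    then show "x \<in> \<Union> ?A"
      by blast
  qed
  then show "\<exists>A. countable A \<and> A \<subseteq> sets \<mu> \<and> \<Union> A = space \<mu> \<and> (\<forall>a\<in>A. emeasure \<mu> a \<noteq> \<infinity>)"
    using M_plus_emeasure_Icc_finite[OF \<mu> a, THEN less_imp_neq] M_plus_sets[OF \<mu>] M_plus_space[OF \<mu>]
    by (intro exI[of _ ?A]) auto
qed

lemma norm_add_of_real_lower_bound:
  assumes z: "Im z > 0"
  shows "Im z / (Im z + 1 + cmod z) * (1 + \<bar>t\<bar>) \<le> cmod (z + of_real t)"
proof -
  have "\<bar>t\<bar> \<le> cmod (z + of_real t) + cmod z"
    using norm_triangle_ineq4[of "z + of_real t" z] by simp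
  then have "Im z * (1 + \<bar>t\<bar>) \<le> Im z * (cmod (z + of_real t) + (1 + cmod z))"
    using z by (intro mult_left_mono) auto
  also have "\<dots> = Im z * cmod (z + of_real t) + Im z * (1 + cmod z)"
    by (simp add: algebra_simps)
  also have "Im z * (1 + cmod z) \<le> cmod (z + of_real t) * (1 + cmod z)"
    using abs_Im_le_cmod[of "z + of_real t"] by (intro mult_right_mono) auto
  finally show ?thesis
    using z by (simp add: field_simps add_pos_nonneg)
qed

lemma norm_inverse_power_add_of_real_bound:
  assumes z: "Im z > 0"
  obtains C where "C > 0" "\<And>t::real. cmod (1 / (z + of_real t) ^ k) \<le> C * (1 + \<bar>t\<bar>) powr (- real k)"
proof -
  define c where "c = Im z / (Im z + 1 + cmod z)"
  have c: "c > 0"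
    using z by (simp add: c_def add_pos_nonneg)
  have "cmod (1 / (z + of_real t) ^ k) \<le> (1 / c) ^ k * (1 + \<bar>t\<bar>) powr (- real k)" for t :: real
  proof -
    have pos: "0 < c * (1 + \<bar>t\<bar>)"
      using c by simp
    have le: "c * (1 + \<bar>t\<bar>) \<le> cmod (z + of_real t)"
      unfolding c_def by (rule norm_add_of_real_lower_bound[OF z])
    then have "0 < cmod (z + of_real t)"
      using pos by linarith
    with pos le have "1 / cmod (z + of_real t) ^ k \<le> 1 / (c * (1 + \<bar>t\<bar>)) ^ k"
      using c by (intro divide_left_mono power_mono mult_pos_pos zero_less_power) auto
    also have "\<dots> = (1 / c) ^ k * (1 + \<bar>t\<bar>) powr (- real k)"
      by (simp add: power_mult_distrib power_one_over powr_minus powr_realpow divide_inverse power_inverse)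
    finally show ?thesis
      by (simp add: norm_divide norm_power)
  qed
  then show ?thesis
    using c that[of "(1 / c) ^ k"] by simp
qed

lemma C_transform_integrable:
  assumes \<mu>: "\<mu> \<in> M_plus (real k)" and z: "Im z > 0"
  shows "integrable \<mu> (\<lambda>t. 1 / (z + of_real t) ^ k)"
proof -
  obtain C where C: "\<And>t::real. cmod (1 / (z + of_real t) ^ k) \<le> C * (1 + \<bar>t\<bar>) powr (- real k)"
    using norm_inverse_power_add_of_real_bound[OF z] by blast
  show ?thesis
  proof (rule Bochner_Integration.integrable_bound)
    show "integrable \<mu> (\<lambda>t. C * (1 + \<bar>t\<bar>) powr (- real k))"
      using M_plus_weight_integrable[OF \<mu>] by simp
    show "(\<lambda>t. 1 / (z + of_real t) ^ k) \<in> borel_measurable \<mu>"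
      using M_plus_sets[OF \<mu>] by measurable
    show "AE t in \<mu>. norm (1 / (z + of_real t) ^ k) \<le> norm (C * (1 + \<bar>t\<bar>) powr (- real k))"
      using C by (auto intro!: AE_I2 order_trans[OF C])
  qed
qed

lemma Im_inverse_Complex_1: "Im (1 / Complex y 1) = - 1 / (y^2 + 1)"
  by (simp add: Im_divide power2_eq_square)

lemma Im_inverse_square_Complex_1: "Im (1 / (Complex y 1)^2) = - (2 * y / (y^2 + 1)^2)"
  by (simp add: Im_divide power2_eq_square complex_norm_square field_simps cmod_def del: minus_divide_left)

lemma C_transform_eq_imp_kernel_integrals_eq:
  assumes \<nu>: "\<nu> \<in> M_plus 1" and \<mu>: "\<mu> \<in> M_plus 2"
    and eq: "C_transform 1 \<nu> (Complex x 1) = C_transform 2 \<mu> (Complex x 1)"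
  shows "(\<integral>t. 1 / ((x + t)^2 + 1) \<partial>\<nu>) = (\<integral>t. 2 * (x + t) / ((x + t)^2 + 1)^2 \<partial>\<mu>)"
proof -
  have shift: "Complex x 1 + of_real t = Complex (x + t) 1" for t
    by (simp add: complex_eq_iff)
  have "integrable \<nu> (\<lambda>t. 1 / (Complex x 1 + of_real t) ^ 1)"
    using \<nu> by (intro C_transform_integrable) auto
  then have "Im (C_transform 1 \<nu> (Complex x 1)) = (\<integral>t. - (1 / ((x + t)^2 + 1)) \<partial>\<nu>)"
    by (simp add: C_transform_def integral_Im[symmetric] shift Im_inverse_Complex_1)
  moreover have "integrable \<mu> (\<lambda>t. 1 / (Complex x 1 + of_real t) ^ 2)"
    using \<mu> by (intro C_transform_integrable) auto
  then have "Im (C_transform 2 \<mu> (Complex x 1)) = (\<integral>t. - (2 * (x + t) / ((x + t)^2 + 1)^2) \<partial>\<mu>)"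
    by (simp add: C_transform_def integral_Im[symmetric] shift Im_inverse_square_Complex_1)
  ultimately show ?thesis
    using eq by simp
qed

lemma integral_Icc_inverse_square_add_one:
  fixes a b t :: real
  assumes "a \<le> b"
  shows "(\<integral>x. indicator {a..b} x * (1 / ((x + t)^2 + 1)) \<partial>lborel) = arctan (b + t) - arctan (a + t)"
proof -
  have nz: "(x + t)^2 + 1 \<noteq> 0" for x
    using zero_le_power2[of "x + t"] by linarith
  have "(\<integral>x. indicator {a..b} x *\<^sub>R (1 / ((x + t)^2 + 1)) \<partial>lborel) = arctan (b + t) - arctan (a + t)"
  proof (rule integral_FTC_atLeastAtMost[OF assms])
    fix x
    have "((\<lambda>x. arctan (x + t)) has_real_derivative (1 / ((x + t)^2 + 1))) (at x)"
      using nz by (auto intro!: derivative_eq_intros simp: field_simps)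
    then show "((\<lambda>x. arctan (x + t)) has_vector_derivative (1 / ((x + t)^2 + 1))) (at x within {a..b})"
      by (simp add: has_real_derivative_iff_has_vector_derivative has_vector_derivative_at_within)
  next
    show "continuous_on {a..b} (\<lambda>x. 1 / ((x + t)^2 + 1))"
      using nz by (intro continuous_intros) auto
  qed
  then show ?thesis
    by simp
qed

lemma integral_Icc_derivative_inverse_square_add_one:
  fixes a b t :: real
  assumes "a \<le> b"
  shows "(\<integral>x. indicator {a..b} x * (2 * (x + t) / ((x + t)^2 + 1)^2) \<partial>lborel)
    = 1 / ((a + t)^2 + 1) - 1 / ((b + t)^2 + 1)"
proof -
  have nz: "(x + t)^2 + 1 \<noteq> 0" for x
    using zero_le_power2[of "x + t"] by linarith
  have "(\<integral>x. indicator {a..b} x *\<^sub>R (2 * (x + t) / ((x + t)^2 + 1)^2) \<partial>lborel)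
      = - 1 / ((b + t)^2 + 1) - - 1 / ((a + t)^2 + 1)"
  proof (rule integral_FTC_atLeastAtMost[OF assms])
    fix x
    have "((\<lambda>x. - 1 / ((x + t)^2 + 1)) has_real_derivative (2 * (x + t) / ((x + t)^2 + 1)^2)) (at x)"
      using nz by (auto intro!: derivative_eq_intros simp: power2_eq_square divide_simps)
    then show "((\<lambda>x. - 1 / ((x + t)^2 + 1)) has_vector_derivative (2 * (x + t) / ((x + t)^2 + 1)^2))
        (at x within {a..b})"
      by (simp add: has_real_derivative_iff_has_vector_derivative has_vector_derivative_at_within)
  next
    show "continuous_on {a..b} (\<lambda>x. 2 * (x + t) / ((x + t)^2 + 1)^2)"
      using nz by (intro continuous_intros) auto
  qed
  then show ?thesis
    by simp
qed

lemma inverse_square_add_one_le: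
  fixes t :: real
  shows "1 / (t^2 + 1) \<le> 2 * (1 + \<bar>t\<bar>) powr -2"
proof -
  have "(1 + \<bar>t\<bar>)^2 \<le> 2 * (t^2 + 1)"
    using zero_le_power2[of "\<bar>t\<bar> - 1"] by (simp add: power2_eq_square algebra_simps)
  moreover have "0 < t^2 + 1"
    using zero_le_power2[of t] by linarith
  ultimately show ?thesis
    by (simp add: powr_neg_numeral divide_simps)
qed

lemma inverse_shifted_square_add_one_le:
  fixes x t :: real
  assumes "\<bar>x\<bar> \<le> b"
  shows "1 / ((x + t)^2 + 1) \<le> 2 * (1 + b)^2 * (1 + \<bar>t\<bar>) powr -2"
proof -
  have b: "0 \<le> b"
    using assms by linarith
  have "\<bar>t\<bar> \<le> \<bar>x\<bar> + \<bar>x + t\<bar>"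
    by arith
  moreover have "(1 + b) * (1 + \<bar>x + t\<bar>) = 1 + b + \<bar>x + t\<bar> + b * \<bar>x + t\<bar>"
    by (simp add: algebra_simps)
  ultimately have "1 + \<bar>t\<bar> \<le> (1 + b) * (1 + \<bar>x + t\<bar>)"
    using assms mult_nonneg_nonneg[OF b abs_ge_zero, of "x + t"] by linarith
  then have "(1 + \<bar>t\<bar>)^2 \<le> (1 + b)^2 * (1 + \<bar>x + t\<bar>)^2"
    by (metis abs_ge_zero add_nonneg_nonneg power_mono power_mult_distrib zero_le_one)
  then have "(1 + \<bar>x + t\<bar>) powr -2 \<le> (1 + b)^2 * (1 + \<bar>t\<bar>) powr -2"
    using assms by (simp add: powr_neg_numeral field_simps add_nonneg_pos)
  then show ?thesis
    using inverse_square_add_one_le[of "x + t"] by linarith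
qed

lemma abs_derivative_inverse_square_add_one_le:
  fixes y :: real
  shows "\<bar>2 * y / (y^2 + 1)^2\<bar> \<le> 1 / (y^2 + 1)"
proof -
  have "2 * \<bar>y\<bar> \<le> y^2 + 1"
    using zero_le_power2[of "\<bar>y\<bar> - 1"] by (simp add: power2_eq_square algebra_simps)
  then show ?thesis
    by (simp add: abs_mult divide_simps power2_eq_square add_nonneg_pos)
qed

lemma M_plus_integrable_inverse_shifted_square_add_one:
  assumes \<mu>: "\<mu> \<in> M_plus 2"
  shows "integrable \<mu> (\<lambda>t. 1 / ((x + t)^2 + 1))"
proof (rule Bochner_Integration.integrable_bound)
  show "integrable \<mu> (\<lambda>t. 2 * (1 + \<bar>x\<bar>)^2 * (1 + \<bar>t\<bar>) powr -2)"
    using M_plus_weight_integrable[OF \<mu>] by simp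
  show "(\<lambda>t. 1 / ((x + t)^2 + 1)) \<in> borel_measurable \<mu>"
    using M_plus_sets[OF \<mu>] by measurable
  show "AE t in \<mu>. norm (1 / ((x + t)^2 + 1)) \<le> norm (2 * (1 + \<bar>x\<bar>)^2 * (1 + \<bar>t\<bar>) powr -2)"
    using inverse_shifted_square_add_one_le[of x "\<bar>x\<bar>"] zero_le_power2[of "x + _"] by (auto intro!: AE_I2)
qed

lemma Fubini_integral_M_plus_lborel:
  fixes g :: "real \<Rightarrow> real \<Rightarrow> real"
  assumes M: "M \<in> M_plus a" "0 \<le> a"
    and S: "S \<in> sets borel" "emeasure lborel S < \<infinity>"
    and g: "(\<lambda>(x, t). g x t) \<in> borel_measurable (borel \<Otimes>\<^sub>M borel)"
    and bound: "\<And>x t. x \<in> S \<Longrightarrow> \<bar>g x t\<bar> \<le> B * (1 + \<bar>t\<bar>) powr (- a)" and B: "0 \<le> B"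
  shows "integrable M (\<lambda>t. \<integral>x. indicator S x * g x t \<partial>lborel)"
    and "(\<integral>x. indicator S x * (\<integral>t. g x t \<partial>M) \<partial>lborel) = (\<integral>t. (\<integral>x. indicator S x * g x t \<partial>lborel) \<partial>M)"
proof -
  interpret M: sigma_finite_measure M
    using M_plus_sigma_finite[OF M] .
  interpret pair_sigma_finite lborel M
    by unfold_locales
  have sets: "sets (lborel \<Otimes>\<^sub>M M) = sets (borel \<Otimes>\<^sub>M borel)"
    using M_plus_sets[OF M(1)] by (intro sets_pair_measure_cong) simp_all
  define f where "f = (\<lambda>(x, t). indicator S x * g x t)"
  define W where "W = (\<integral>\<^sup>+ t. ennreal ((1 + \<bar>t\<bar>) powr (- a)) \<partial>M)"
  have f: "f \<in> borel_measurable (lborel \<Otimes>\<^sub>M M)"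
    unfolding measurable_cong_sets[OF sets refl] f_def using g S(1) by measurable
  have "(\<integral>\<^sup>+p. ennreal (norm (f p)) \<partial>(lborel \<Otimes>\<^sub>M M))
      \<le> (\<integral>\<^sup>+p. ennreal B * ennreal ((1 + \<bar>snd p\<bar>) powr (- a)) * indicator S (fst p) \<partial>(lborel \<Otimes>\<^sub>M M))"
    using bound B
    by (intro nn_integral_mono) (auto simp: f_def ennreal_mult[symmetric] split: split_indicator)
  also have "\<dots> = (\<integral>\<^sup>+x. ennreal B * W * indicator S x \<partial>lborel)"
    using M_plus_sets[OF M(1)] S(1)
    by (subst M.nn_integral_fst[symmetric]) (auto simp: W_def nn_integral_multc nn_integral_cmult)
  also have "\<dots> = ennreal B * W * emeasure lborel S"
    using S(1) by (simp add: nn_integral_cmult_indicator)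
  also have "\<dots> < \<infinity>"
    using M(1) S(2) by (simp add: W_def M_plus_def ennreal_mult_less_top)
  finally have "integrable (lborel \<Otimes>\<^sub>M M) f"
    by (intro integrableI_bounded f)
  then show "integrable M (\<lambda>t. \<integral>x. indicator S x * g x t \<partial>lborel)"
    and "(\<integral>x. indicator S x * (\<integral>t. g x t \<partial>M) \<partial>lborel) = (\<integral>t. (\<integral>x. indicator S x * g x t \<partial>lborel) \<partial>M)"
    using integrable_snd[of "\<lambda>x t. indicator S x * g x t"] Fubini_integral[of "\<lambda>x t. indicator S x * g x t"]
    by (simp_all add: f_def case_prod_beta')
qed

lemma C_transform_eq_imp_arctan_integral_eq:
  assumes \<nu>: "\<nu> \<in> M_plus 1" and \<mu>: "\<mu> \<in> M_plus 2"
    and eq: "\<forall>z. Im z > 0 \<longrightarrow> C_transform 1 \<nu> z = C_transform 2 \<mu> z" and b: "0 \<le> b"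
  shows "integrable \<nu> (\<lambda>t. arctan (b + t) - arctan t)"
    and "(\<integral>t. arctan (b + t) - arctan t \<partial>\<nu>) = (\<integral>t. 1 / (t^2 + 1) - 1 / ((b + t)^2 + 1) \<partial>\<mu>)"
proof -
  have \<nu>2: "\<nu> \<in> M_plus 2"
    using M_plus_mono[of 1 2] \<nu> by auto
  have S: "{0..b} \<in> sets borel" "emeasure lborel {0..b} < \<infinity>"
    using b by simp_all
  have B: "0 \<le> 2 * (1 + b)^2"
    by simp
  have bound1: "\<bar>1 / ((x + t)^2 + 1)\<bar> \<le> 2 * (1 + b)^2 * (1 + \<bar>t\<bar>) powr -2" if "x \<in> {0..b}" for x t
    using inverse_shifted_square_add_one_le[of x b t] that zero_le_power2[of "x + t"] by simp
  have bound2: "\<bar>2 * (x + t) / ((x + t)^2 + 1)^2\<bar> \<le> 2 * (1 + b)^2 * (1 + \<bar>t\<bar>) powr -2"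
    if "x \<in> {0..b}" for x t
    using inverse_shifted_square_add_one_le[of x b t] abs_derivative_inverse_square_add_one_le[of "x + t"] that
    by simp
  have "(\<lambda>(x, t). 1 / ((x + t)^2 + 1 :: real)) \<in> borel_measurable (borel \<Otimes>\<^sub>M borel)"
    by measurable
  note Fubini1 = Fubini_integral_M_plus_lborel[OF \<nu>2 zero_le_numeral S this bound1 B]
  have "(\<lambda>(x, t). 2 * (x + t) / ((x + t)^2 + 1 :: real)^2) \<in> borel_measurable (borel \<Otimes>\<^sub>M borel)"
    by measurable
  note Fubini2 = Fubini_integral_M_plus_lborel[OF \<mu> zero_le_numeral S this bound2 B]
  have FTC1: "(\<integral>x. indicator {0..b} x * (1 / ((x + t)^2 + 1)) \<partial>lborel) = arctan (b + t) - arctan t" for t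
    using integral_Icc_inverse_square_add_one[OF b, of t] by simp
  have FTC2: "(\<integral>x. indicator {0..b} x * (2 * (x + t) / ((x + t)^2 + 1)^2) \<partial>lborel)
      = 1 / (t^2 + 1) - 1 / ((b + t)^2 + 1)" for t
    using integral_Icc_derivative_inverse_square_add_one[OF b, of t] by simp
  show "integrable \<nu> (\<lambda>t. arctan (b + t) - arctan t)"
    using Fubini1(1) unfolding FTC1 .
  have "(\<integral>t. arctan (b + t) - arctan t \<partial>\<nu>)
      = (\<integral>x. indicator {0..b} x * (\<integral>t. 1 / ((x + t)^2 + 1) \<partial>\<nu>) \<partial>lborel)"
    using Fubini1(2) unfolding FTC1 by simp
  also have "\<dots> = (\<integral>x. indicator {0..b} x * (\<integral>t. 2 * (x + t) / ((x + t)^2 + 1)^2 \<partial>\<mu>) \<partial>lborel)"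
    using C_transform_eq_imp_kernel_integrals_eq[OF \<nu> \<mu>] eq by simp
  also have "\<dots> = (\<integral>t. 1 / (t^2 + 1) - 1 / ((b + t)^2 + 1) \<partial>\<mu>)"
    using Fubini2(2) unfolding FTC2 by simp
  finally show "(\<integral>t. arctan (b + t) - arctan t \<partial>\<nu>) = (\<integral>t. 1 / (t^2 + 1) - 1 / ((b + t)^2 + 1) \<partial>\<mu>)" .
qed

lemma C_transform_eq_imp_measure_Icc_le:
  assumes \<nu>: "\<nu> \<in> M_plus 1" and \<mu>: "\<mu> \<in> M_plus 2"
    and eq: "\<forall>z. Im z > 0 \<longrightarrow> C_transform 1 \<nu> z = C_transform 2 \<mu> z" and r: "0 \<le> r"
  shows "pi / 4 * measure \<nu> {-r..0} \<le> (\<integral>t. 1 / (t^2 + 1) \<partial>\<mu>)"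
proof -
  define b where "b = r + 1"
  have b: "0 \<le> b"
    using r by (simp add: b_def)
  have "integrable \<nu> (indicator {-r..0} :: real \<Rightarrow> real)"
    using M_plus_emeasure_bounded_finite[OF \<nu>, of "{-r..0}"] M_plus_sets[OF \<nu>]
    by (intro integrable_real_indicator) auto
  then have "pi / 4 * measure \<nu> {-r..0} = (\<integral>t. pi / 4 * indicator {-r..0} t \<partial>\<nu>)"
    using M_plus_space[OF \<nu>] by simp
  also have "\<dots> \<le> (\<integral>t. arctan (b + t) - arctan t \<partial>\<nu>)"
  proof (intro integral_mono C_transform_eq_imp_arctan_integral_eq(1)[OF \<nu> \<mu> eq b])
    fix t :: real
    have "arctan t \<le> arctan (b + t)"
      using b by (simp add: arctan_le_iff)
    moreover have "pi / 4 \<le> arctan (b + t) - arctan t" if "t \<in> {-r..0}"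
    proof -
      have "arctan 1 \<le> arctan (b + t)"
        using that by (intro arctan_monotone') (simp add: b_def)
      moreover have "arctan t \<le> 0"
        using that by (simp add: arctan_le_zero_iff)
      ultimately show ?thesis
        using arctan_one by linarith
    qed
    ultimately show "pi / 4 * indicator {-r..0} t \<le> arctan (b + t) - arctan t"
      by (simp split: split_indicator)
  qed (use \<open>integrable \<nu> _\<close> in simp)
  also have "\<dots> = (\<integral>t. 1 / (t^2 + 1) - 1 / ((b + t)^2 + 1) \<partial>\<mu>)"
    by (rule C_transform_eq_imp_arctan_integral_eq(2)[OF \<nu> \<mu> eq b])
  also have "\<dots> \<le> (\<integral>t. 1 / (t^2 + 1) \<partial>\<mu>)"
    using M_plus_integrable_inverse_shifted_square_add_one[OF \<mu>, of 0]
      M_plus_integrable_inverse_shifted_square_add_one[OF \<mu>, of b] zero_le_power2[of "b + _"]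
    by (intro integral_mono) auto
  finally show ?thesis .
qed

lemma emeasure_atMost_le_if_Icc_le:
  fixes M :: "real measure"
  assumes M: "sets M = sets borel" and le: "\<And>n::nat. emeasure M {- real n..a} \<le> c"
  shows "emeasure M {..a} \<le> c"
proof -
  have "(\<Union>n. {- real n..a}) = {..a}"
  proof (intro set_eqI iffI)
    fix x assume "x \<in> {..a}"
    moreover obtain n :: nat where "- x \<le> real n"
      using real_arch_simple by blast
    ultimately have "x \<in> {- real n..a}"
      by auto
    then show "x \<in> (\<Union>n. {- real n..a})"
      by blast
  qed auto
  moreover have "(SUP n. emeasure M {- real n..a}) = emeasure M (\<Union>n. {- real n..a})"
  proof (rule SUP_emeasure_incseq)
    show "range (\<lambda>n. {- real n..a}) \<subseteq> sets M"
      unfolding M by (simp add: image_subset_iff)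
    show "incseq (\<lambda>n. {- real n..a})"
      by (intro monoI) simp
  qed
  ultimately have "emeasure M {..a} = (SUP n. emeasure M {- real n..a})"
    by simp
  also have "\<dots> \<le> c"
    using le by (rule SUP_least)
  finally show ?thesis .
qed

lemma C_transform_eq_imp_emeasure_atMost_finite:
  assumes \<nu>: "\<nu> \<in> M_plus 1" and \<mu>: "\<mu> \<in> M_plus 2"
    and eq: "\<forall>z. Im z > 0 \<longrightarrow> C_transform 1 \<nu> z = C_transform 2 \<mu> z"
  shows "emeasure \<nu> {..0} < \<infinity>"
proof -
  define K where "K = (\<integral>t. 1 / (t^2 + 1) \<partial>\<mu>)"
  have "emeasure \<nu> {- real n..0} \<le> ennreal (4 / pi * K)" for n :: nat
  proof -
    have "emeasure \<nu> {- real n..0} = ennreal (measure \<nu> {- real n..0})"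
      using M_plus_emeasure_bounded_finite[OF \<nu>, of "{- real n..0}"]
      by (intro emeasure_eq_ennreal_measure) auto
    also have "\<dots> \<le> ennreal (4 / pi * K)"
      using C_transform_eq_imp_measure_Icc_le[OF \<nu> \<mu> eq, of "real n"]
      by (intro ennreal_leI) (simp add: K_def field_simps)
    finally show ?thesis .
  qed
  then have "emeasure \<nu> {..0} \<le> ennreal (4 / pi * K)"
    by (rule emeasure_atMost_le_if_Icc_le[OF M_plus_sets[OF \<nu>]])
  then show ?thesis
    using ennreal_less_top[of "4 / pi * K"] by (simp add: le_less_trans)
qed

lemma M_plus_emeasure_lessThan_finite:
  assumes \<nu>: "\<nu> \<in> M_plus a" and a: "0 \<le> a" and fin: "emeasure \<nu> {..0} < \<infinity>"
  shows "emeasure \<nu> {..<s} < \<infinity>"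
proof -
  have "emeasure \<nu> {..<s} \<le> emeasure \<nu> ({..0} \<union> {0..\<bar>s\<bar>})"
    using M_plus_sets[OF \<nu>] by (intro emeasure_mono) auto
  also have "\<dots> \<le> emeasure \<nu> {..0} + emeasure \<nu> {0..\<bar>s\<bar>}"
    using M_plus_sets[OF \<nu>] by (intro emeasure_subadditive) auto
  also have "\<dots> < \<infinity>"
    using fin M_plus_emeasure_bounded_finite[OF \<nu> a, of "{0..\<bar>s\<bar>}"] by simp
  finally show ?thesis .
qed

lemma nn_integral_Ici_inverse_square_one_plus:
  fixes t :: real
  assumes "0 \<le> t"
  shows "(\<integral>\<^sup>+s. ennreal (1 / (1 + s)^2) * indicator {t..} s \<partial>lborel) = ennreal (1 / (1 + t))"
proof -
  have "(\<integral>\<^sup>+s. ennreal (1 / (1 + s)^2) * indicator {t..} s \<partial>lborel) = ennreal (0 - (- 1 / (1 + t)))"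
  proof (rule nn_integral_FTC_atLeast)
    show "DERIV (\<lambda>s. - 1 / (1 + s)) s :> 1 / (1 + s)^2" if "t \<le> s" for s
      using that assms by (auto intro!: derivative_eq_intros simp: power2_eq_square divide_simps)
    show "((\<lambda>s::real. - 1 / (1 + s)) \<longlongrightarrow> 0) at_top"
      by real_asymp
  qed simp_all
  then show ?thesis
    by simp
qed

lemma nn_integral_Ici_inverse_one_plus_square:
  fixes t :: real
  shows "(\<integral>\<^sup>+s. ennreal (1 / (1 + s^2)) * indicator {t..} s \<partial>lborel) = ennreal (pi / 2 - arctan t)"
proof (rule nn_integral_FTC_atLeast)
  show "DERIV arctan s :> 1 / (1 + s^2)" for s
    using DERIV_arctan[of s] by (simp add: divide_inverse)
  show "0 \<le> 1 / (1 + s^2)" for s :: real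
    using zero_le_power2[of s] by simp
qed (simp_all add: tendsto_arctan_at_top)

lemma nn_integral_Ioi_weight_le:
  fixes t :: real
  shows "(\<integral>\<^sup>+s. ennreal ((1 + \<bar>s\<bar>) powr -2) * indicator {t<..} s \<partial>lborel)
    \<le> ennreal pi * indicator {..0} t + ennreal ((1 + \<bar>t\<bar>) powr -1)"
proof (cases "0 \<le> t")
  case True
  have "(\<integral>\<^sup>+s. ennreal ((1 + \<bar>s\<bar>) powr -2) * indicator {t<..} s \<partial>lborel)
      \<le> (\<integral>\<^sup>+s. ennreal (1 / (1 + s)^2) * indicator {t..} s \<partial>lborel)"
    using True by (intro nn_integral_mono) (auto simp: powr_neg_numeral split: split_indicator)
  also have "\<dots> = ennreal ((1 + \<bar>t\<bar>) powr -1)"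
    using True by (simp add: nn_integral_Ici_inverse_square_one_plus powr_minus_divide)
  finally show ?thesis
    by (simp add: add_increasing)
next
  case False
  have "1 / (1 + \<bar>s\<bar>)^2 \<le> 1 / (1 + s^2)" for s :: real
  proof -
    have "1 + s^2 \<le> (1 + \<bar>s\<bar>)^2"
      by (simp add: power2_eq_square algebra_simps)
    moreover have "0 < 1 + s^2"
      using zero_le_power2[of s] by linarith
    ultimately show ?thesis
      by (intro divide_left_mono mult_pos_pos) auto
  qed
  then have "(\<integral>\<^sup>+s. ennreal ((1 + \<bar>s\<bar>) powr -2) * indicator {t<..} s \<partial>lborel)
      \<le> (\<integral>\<^sup>+s. ennreal (1 / (1 + s^2)) * indicator {t..} s \<partial>lborel)"
    by (intro nn_integral_mono) (auto simp: powr_neg_numeral intro!: ennreal_leI split: split_indicator)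
  also have "\<dots> \<le> ennreal pi"
    using arctan_bounded[of t] by (simp add: nn_integral_Ici_inverse_one_plus_square)
  finally show ?thesis
    using False by (auto intro: add_increasing2)
qed

lemma nn_integral_emeasure_lessThan:
  fixes \<nu> :: "real measure" and w :: "real \<Rightarrow> ennreal"
  assumes \<nu>: "sigma_finite_measure \<nu>" "sets \<nu> = sets borel" and w[measurable]: "w \<in> borel_measurable borel"
  shows "(\<integral>\<^sup>+s. emeasure \<nu> {..<s} * w s \<partial>lborel) = (\<integral>\<^sup>+t. (\<integral>\<^sup>+s. w s * indicator {t<..} s \<partial>lborel) \<partial>\<nu>)"
proof -
  interpret \<nu>: sigma_finite_measure \<nu>
    by (rule \<nu>(1))
  interpret pair_sigma_finite lborel \<nu>
    by unfold_locales
  have sets: "sets (lborel \<Otimes>\<^sub>M \<nu>) = sets (borel \<Otimes>\<^sub>M borel)"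
    using \<nu>(2) by (intro sets_pair_measure_cong) simp_all
  have inner: "(\<integral>\<^sup>+t. w s * indicator {t<..} s \<partial>\<nu>) = emeasure \<nu> {..<s} * w s" for s
  proof -
    have "(\<lambda>t. w s * indicator {t<..} s) = (\<lambda>t. w s * indicator {..<s} t)"
      by (auto split: split_indicator)
    then show ?thesis
      using \<nu>(2) by (simp add: nn_integral_cmult_indicator mult.commute)
  qed
  have "(\<lambda>(s, t). w s * indicator {t<..} s) \<in> borel_measurable (lborel \<Otimes>\<^sub>M \<nu>)"
    unfolding measurable_cong_sets[OF sets refl] by (simp add: indicator_def) measurable
  then show ?thesis
    by (simp only: Fubini' inner)
qed

lemma nn_integral_emeasure_lessThan_weight_finite:
  assumes \<nu>: "\<nu> \<in> M_plus 1" and fin: "emeasure \<nu> {..0} < \<infinity>"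
  shows "(\<integral>\<^sup>+s. emeasure \<nu> {..<s} * ennreal ((1 + \<bar>s\<bar>) powr -2) \<partial>lborel) < \<infinity>"
proof -
  have "(\<integral>\<^sup>+s. emeasure \<nu> {..<s} * ennreal ((1 + \<bar>s\<bar>) powr -2) \<partial>lborel)
      = (\<integral>\<^sup>+t. (\<integral>\<^sup>+s. ennreal ((1 + \<bar>s\<bar>) powr -2) * indicator {t<..} s \<partial>lborel) \<partial>\<nu>)"
    using M_plus_sigma_finite[OF \<nu>] M_plus_sets[OF \<nu>] by (intro nn_integral_emeasure_lessThan) auto
  also have "\<dots> \<le> (\<integral>\<^sup>+t. ennreal pi * indicator {..0} t + ennreal ((1 + \<bar>t\<bar>) powr -1) \<partial>\<nu>)"
    by (intro nn_integral_mono nn_integral_Ioi_weight_le)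
  also have "\<dots> = ennreal pi * emeasure \<nu> {..0} + (\<integral>\<^sup>+t. ennreal ((1 + \<bar>t\<bar>) powr -1) \<partial>\<nu>)"
    using M_plus_sets[OF \<nu>] by (simp add: nn_integral_add nn_integral_cmult_indicator)
  also have "\<dots> < \<infinity>"
    using \<nu> fin by (simp add: M_plus_def ennreal_mult_less_top)
  finally show ?thesis .
qed

lemma borel_measurable_measure_lessThan:
  fixes \<nu> :: "real measure"
  assumes "sets \<nu> = sets borel" "\<And>s. emeasure \<nu> {..<s} < \<infinity>"
  shows "(\<lambda>s. measure \<nu> {..<s}) \<in> borel_measurable borel"
proof (rule borel_measurable_mono, rule monoI)
  fix s s' :: real
  assume "s \<le> s'"
  then show "measure \<nu> {..<s} \<le> measure \<nu> {..<s'}"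
    using assms by (intro measure_mono_fmeasurable) (auto simp: fmeasurable_def)
qed

lemma density_measure_lessThan_in_M_plus_2:
  assumes \<nu>: "\<nu> \<in> M_plus 1" and fin: "emeasure \<nu> {..0} < \<infinity>"
  shows "density lborel (\<lambda>s. measure \<nu> {..<s}) \<in> M_plus 2"
proof -
  have fin': "emeasure \<nu> {..<s} < \<infinity>" for s
    using M_plus_emeasure_lessThan_finite[OF \<nu> _ fin] by simp
  have "(\<integral>\<^sup>+t. ennreal ((1 + \<bar>t\<bar>) powr -2) \<partial>density lborel (\<lambda>s. measure \<nu> {..<s}))
      = (\<integral>\<^sup>+s. emeasure \<nu> {..<s} * ennreal ((1 + \<bar>s\<bar>) powr -2) \<partial>lborel)"
    using borel_measurable_measure_lessThan[OF M_plus_sets[OF \<nu>] fin'] fin'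
    by (subst nn_integral_density) (auto simp: emeasure_eq_ennreal_measure less_top)
  then show ?thesis
    using nn_integral_emeasure_lessThan_weight_finite[OF \<nu> fin] by (simp add: M_plus_def)
qed

lemma set_integrable_Ioi_inverse_square_add_of_real:
  assumes z: "Im z > 0"
  shows "set_integrable lborel {t<..} (\<lambda>s. 1 / (z + of_real s)^2)"
proof -
  obtain C where C: "C > 0" "\<And>s::real. cmod (1 / (z + of_real s)^2) \<le> C * (1 + \<bar>s\<bar>) powr -2"
    using norm_inverse_power_add_of_real_bound[OF z, of 2] by auto
  then have bound: "ennreal (cmod (1 / (z + of_real s)^2)) \<le> ennreal C * ennreal ((1 + \<bar>s\<bar>) powr -2)" for s
    by (simp add: ennreal_mult[symmetric] ennreal_leI)
  have "(\<integral>\<^sup>+s. ennreal (norm (indicator {t<..} s *\<^sub>R (1 / (z + of_real s)^2))) \<partial>lborel)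
      \<le> (\<integral>\<^sup>+s. ennreal C * (ennreal ((1 + \<bar>s\<bar>) powr -2) * indicator {t<..} s) \<partial>lborel)"
    using bound by (intro nn_integral_mono) (auto split: split_indicator)
  also have "\<dots> = ennreal C * (\<integral>\<^sup>+s. ennreal ((1 + \<bar>s\<bar>) powr -2) * indicator {t<..} s \<partial>lborel)"
    by (rule nn_integral_cmult) measurable
  also have "\<dots> \<le> ennreal C * (ennreal pi * indicator {..0} t + ennreal ((1 + \<bar>t\<bar>) powr -1))"
    by (intro mult_left_mono nn_integral_Ioi_weight_le) simp
  also have "\<dots> < \<infinity>"
    by (simp add: ennreal_mult_less_top split: split_indicator)
  finally show ?thesis
    unfolding set_integrable_def by (intro integrableI_bounded) auto
qed

lemma integral_Ioi_inverse_square_add_of_real: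
  assumes z: "Im z > 0"
  shows "(\<integral>s. indicator {t<..} s *\<^sub>R (1 / (z + of_real s)^2) \<partial>lborel) = 1 / (z + of_real t)"
proof -
  define g where "g s = 1 / (z + of_real s)^2" for s :: real
  define F where "F s = - 1 / (z + of_real s)" for s :: real
  have nz: "z + of_real s \<noteq> 0" for s :: real
    using z by (auto simp: complex_eq_iff)
  obtain C where C: "\<And>s. cmod (1 / (z + of_real s) ^ 1) \<le> C * (1 + \<bar>s\<bar>) powr - real 1"
    using norm_inverse_power_add_of_real_bound[OF z, of 1] by auto
  have "(LBINT s=ereal t..\<infinity>. g s) = 0 - F t"
  proof (rule interval_integral_FTC_integrable)
    show "(F has_vector_derivative g s) (at s)" for s
    proof -
      have "((\<lambda>w. - 1 / (z + w)) has_field_derivative g s) (at (of_real s))"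
        using nz[of s] by (auto intro!: derivative_eq_intros simp: g_def power2_eq_square field_simps)
      then show ?thesis
        unfolding F_def by (rule has_vector_derivative_real_field)
    qed
    show "isCont g s" for s
      unfolding g_def using nz[of s] by (intro continuous_intros) auto
    show "set_integrable lborel (einterval t \<infinity>) g"
      using set_integrable_Ioi_inverse_square_add_of_real[OF z, of t] by (simp add: g_def[abs_def])
    show "((F \<circ> real_of_ereal) \<longlongrightarrow> F t) (at_right (ereal t))"
      unfolding ereal_tendsto_simps1 F_def using nz[of t]
      by (intro tendsto_intros filterlim_at_split[THEN iffD1, THEN conjunct2]) auto
    show "((F \<circ> real_of_ereal) \<longlongrightarrow> 0) (at_left \<infinity>)"
      unfolding ereal_tendsto_simps1
    proof (rule Lim_null_comparison)
      show "\<forall>\<^sub>F s in at_top. norm (F s) \<le> C * (1 + \<bar>s\<bar>) powr -1"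
        using C by (intro always_eventually allI) (simp add: F_def norm_divide)
      show "((\<lambda>s. C * (1 + \<bar>s\<bar>) powr -1) \<longlongrightarrow> 0) at_top"
        by real_asymp
    qed
  qed simp
  moreover have "(LBINT s=ereal t..\<infinity>. g s) = (\<integral>s. indicator {t<..} s *\<^sub>R g s \<partial>lborel)"
    by (simp add: interval_lebesgue_integral_def set_lebesgue_integral_def)
  ultimately show ?thesis
    by (simp add: F_def g_def)
qed

lemma Fubini_integral_Ioi_measure_lessThan:
  fixes \<nu> :: "real measure" and g :: "real \<Rightarrow> 'a::{banach, second_countable_topology}"
  assumes \<nu>: "sigma_finite_measure \<nu>" "sets \<nu> = sets borel" and fin: "\<And>s. emeasure \<nu> {..<s} < \<infinity>"
    and g[measurable]: "g \<in> borel_measurable borel"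
    and int: "integrable lborel (\<lambda>s. measure \<nu> {..<s} *\<^sub>R g s)"
  shows "(\<integral>t. (\<integral>s. indicator {t<..} s *\<^sub>R g s \<partial>lborel) \<partial>\<nu>) = (\<integral>s. measure \<nu> {..<s} *\<^sub>R g s \<partial>lborel)"
proof -
  interpret \<nu>: sigma_finite_measure \<nu>
    by (rule \<nu>(1))
  interpret pair_sigma_finite lborel \<nu>
    by unfold_locales
  have sets: "sets (lborel \<Otimes>\<^sub>M \<nu>) = sets (borel \<Otimes>\<^sub>M borel)"
    using \<nu>(2) by (intro sets_pair_measure_cong) simp_all
  have indicator_swap: "indicator {t<..} s = indicator {..<s} t" for s t :: real
    by (simp split: split_indicator)
  have int_indicator: "integrable \<nu> (indicator {..<s} :: real \<Rightarrow> real)" for s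
    using fin \<nu>(2) by (intro integrable_real_indicator) auto
  define f where "f = (\<lambda>(s, t). indicator {t<..} s *\<^sub>R g s)"
  have meas: "f \<in> borel_measurable (lborel \<Otimes>\<^sub>M \<nu>)"
    unfolding measurable_cong_sets[OF sets refl] f_def by (simp add: indicator_def) measurable
  have "(\<integral>\<^sup>+p. ennreal (norm (f p)) \<partial>(lborel \<Otimes>\<^sub>M \<nu>)) = (\<integral>\<^sup>+s. (\<integral>\<^sup>+t. ennreal (norm (f (s, t))) \<partial>\<nu>) \<partial>lborel)"
  proof (rule \<nu>.nn_integral_fst[symmetric])
    show "(\<lambda>p. ennreal (norm (f p))) \<in> borel_measurable (lborel \<Otimes>\<^sub>M \<nu>)"
      using meas by (rule measurable_compose) measurable
  qed
  also have "\<dots> = (\<integral>\<^sup>+s. (\<integral>\<^sup>+t. ennreal (norm (g s)) * indicator {..<s} t \<partial>\<nu>) \<partial>lborel)"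
    by (auto simp: f_def intro!: nn_integral_cong split: split_indicator)
  also have "\<dots> = (\<integral>\<^sup>+s. ennreal (norm (measure \<nu> {..<s} *\<^sub>R g s)) \<partial>lborel)"
    using fin \<nu>(2) by (simp add: nn_integral_cmult_indicator emeasure_eq_ennreal_measure less_top ennreal_mult' mult.commute)
  also have "\<dots> < \<infinity>"
    using int by (simp add: integrable_iff_bounded)
  finally have "integrable (lborel \<Otimes>\<^sub>M \<nu>) f"
    by (intro integrableI_bounded meas)
  then have "(\<integral>t. (\<integral>s. indicator {t<..} s *\<^sub>R g s \<partial>lborel) \<partial>\<nu>)
      = (\<integral>s. (\<integral>t. indicator {..<s} t *\<^sub>R g s \<partial>\<nu>) \<partial>lborel)"
    unfolding f_def by (simp only: Fubini_integral indicator_swap)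
  also have "\<dots> = (\<integral>s. measure \<nu> {..<s} *\<^sub>R g s \<partial>lborel)"
    using int_indicator \<nu>(2) by (simp add: sets_eq_imp_space_eq)
  finally show ?thesis .
qed

lemma C_transform_1_eq_C_transform_2_density:
  assumes \<nu>: "\<nu> \<in> M_plus 1" and fin: "emeasure \<nu> {..0} < \<infinity>" and z: "Im z > 0"
  shows "C_transform 1 \<nu> z = C_transform 2 (density lborel (\<lambda>s. measure \<nu> {..<s})) z"
proof -
  let ?F = "\<lambda>s. measure \<nu> {..<s}" and ?g = "\<lambda>s. 1 / (z + of_real s)^2"
  have fin': "emeasure \<nu> {..<s} < \<infinity>" for s
    using M_plus_emeasure_lessThan_finite[OF \<nu> _ fin] by simp
  have F: "?F \<in> borel_measurable borel"
    by (rule borel_measurable_measure_lessThan[OF M_plus_sets[OF \<nu>] fin'])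
  have "integrable (density lborel ?F) ?g"
    using density_measure_lessThan_in_M_plus_2[OF \<nu> fin] z by (intro C_transform_integrable) auto
  then have int: "integrable lborel (\<lambda>s. ?F s *\<^sub>R ?g s)"
    using F by (subst integrable_density[symmetric]) auto
  have "C_transform 1 \<nu> z = (\<integral>t. (\<integral>s. indicator {t<..} s *\<^sub>R ?g s \<partial>lborel) \<partial>\<nu>)"
    by (simp add: C_transform_def integral_Ioi_inverse_square_add_of_real[OF z])
  also have "\<dots> = (\<integral>s. ?F s *\<^sub>R ?g s \<partial>lborel)"
    using M_plus_sigma_finite[OF \<nu>] M_plus_sets[OF \<nu>] fin' int
    by (intro Fubini_integral_Ioi_measure_lessThan) auto
  also have "\<dots> = C_transform 2 (density lborel ?F) z"
    using F by (simp add: C_transform_def integral_density)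
  finally show ?thesis .
qed

theorem theorem7p16:
  fixes \<nu> :: "real measure"
  assumes "\<nu> \<in> M_plus 1"
  shows "(\<exists>\<mu> \<in> M_plus 2. \<forall>z. Im z > 0 \<longrightarrow> C_transform 1 \<nu> z = C_transform 2 \<mu> z)
         \<longleftrightarrow> emeasure \<nu> {..0} < \<infinity>"
proof
  assume "\<exists>\<mu> \<in> M_plus 2. \<forall>z. Im z > 0 \<longrightarrow> C_transform 1 \<nu> z = C_transform 2 \<mu> z"
  then show "emeasure \<nu> {..0} < \<infinity>"
    using C_transform_eq_imp_emeasure_atMost_finite[OF assms] by blast
next
  assume "emeasure \<nu> {..0} < \<infinity>"
  then show "\<exists>\<mu> \<in> M_plus 2. \<forall>z. Im z > 0 \<longrightarrow> C_transform 1 \<nu> z = C_transform 2 \<mu> z"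
    using density_measure_lessThan_in_M_plus_2 C_transform_1_eq_C_transform_2_density assms by blast
qed

end
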